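(* For all integers $n\ge 2$, $0\le r\le n$ and $0\le k\le n-2$, $$N_k^{n,r}=\frac{2(k+1)}{n-k-1}\sum_{i}\binom{k}{i}\binom{n-k+i-1}{r}\binom{n-i-1}{n-r},$$ where the sum runs over all integers $i$ with $0\le i\le k$.
   Context: A lattice path from $(0,0)$ to $(r,n-r)$ (with integers $n\ge 1$, $0\le r\le n$) is a sequence of lattice points $v_0=(0,0),v_1,\dots,v_n=(r,n-r)$ with each step $v_i-v_{i-1}\in\{(1,0),(0,1)\}$ (an E step or an N step); its vertex set is $\{v_0,\dots,v_n\}$. For $k\ge 0$, $N_k^{n,r}$ denotes the number of ordered pairs $(P,Q)$ of lattice paths from $(0,0)$ to $(r,n-r)$ such that the intersection of their vertex sets, with the two points $(0,0)$ and $(r,n-r)$ removed, has exactly $k$ elements. Binomial coefficients $\binom{a}{b}$ with $a\ge 0$ are $0$ if $b<0$ or $b>a$. *)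

theory Defs
  imports Complex_Main
begin

text \<open>A lattice path with n steps is encoded as a list of steps, True = E step (1,0),
  False = N step (0,1). It ends at (r, n-r) iff it has length n and exactly r E steps.\<close>

definition lattice_paths :: "nat \<Rightarrow> nat \<Rightarrow> bool list set" where
  "lattice_paths n r = {p. length p = n \<and> length (filter id p) = r}"

definition path_vertex :: "bool list \<Rightarrow> nat \<Rightarrow> nat \<times> nat" where
  "path_vertex p i = (length (filter id (take i p)), length (filter Not (take i p)))"

definition path_vertices :: "bool list \<Rightarrow> (nat \<times> nat) set" where
  "path_vertices p = {path_vertex p i | i. i \<le> length p}"

definition N_count :: "nat \<Rightarrow> nat \<Rightarrow> nat \<Rightarrow> nat" where
  "N_count k n r = card {(P, Q). P \<in> lattice_paths n r \<and> Q \<in> lattice_paths n r \<and>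
      card (path_vertices P \<inter> path_vertices Q - {(0, 0), (r, n - r)}) = k}"

end

theory Submission
  imports Defs
begin

text \<open>
  Read a pair of paths with n steps as one word of length n over the alphabet of step pairs.
  The two paths share their vertex after i steps exactly when the two prefixes of length i
  contain the same number of E steps; call such an i \<ge> 1 a contact. Let W(t, a, b, c) be the
  number of words of length t whose components have a and b E steps and which have c contacts,
  so that N_k^{n,r} = W(n, r, r, k + 1) (the endpoint is a contact). Deleting the last letter
  gives a four-term recurrence for W, with the special form
  W(t+1, e, e, c+1) = W(t, e-1, e-1, c) + W(t, e, e, c) + 2 W(t, e, e-1, c) at a contact.
  For b \<le> a the count has the closed form
  W(t, a, b, c) = \<Sum> i. binom(c, i) D_i, D_i = B(p, b-i) B(q, t-a-j) - B(p, b-i-1) B(q, t-a-j-1),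
  where j = c - i, p = t-1-i, q = t-1-j and B is the binomial coefficient with integer upper
  index; Pascal's rule shows that it satisfies the same recurrence and initial values.
  At (n, r, r, k + 1), writing X_i for the i-th product of binomial coefficients in the stated
  formula, the symmetry and absorption identities turn (n-k-1) D_i into
  (k+1-i) X_i + i X_(i-1). Since binom(k+1, i) (k+1-i) = (k+1) binom(k, i) and
  binom(k+1, i) i = (k+1) binom(k, i-1), every X_i then occurs twice with weight (k+1) binom(k, i).
\<close>

section \<open>Binomial coefficients with integer upper index\<close>

text \<open>The upper index may be negative: the values at t = 0 of the closed form need it.\<close>

definition binom_int :: "int \<Rightarrow> int \<Rightarrow> real" where
  "binom_int a m = (if m < 0 then 0 else of_int a gchoose nat m)"

lemma binom_int_of_nat: "binom_int (int a) (int m) = real (a choose m)"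
  by (simp add: binom_int_def binomial_gbinomial)

lemma binom_int_Suc: "binom_int (a + 1) m = binom_int a m + binom_int a (m - 1)"
proof (cases "m \<le> 0")
  case True
  then show ?thesis by (cases "m = 0") (auto simp: binom_int_def)
next
  case False
  then obtain k where k: "m = int (Suc k)"
    by (metis gr0_implies_Suc not_le pos_int_cases)
  then have "nat m = Suc k" "nat (m - 1) = k" by auto
  with k show ?thesis
    using gbinomial_Suc_Suc[of "of_int a :: real" k] by (simp add: binom_int_def)
qed

lemma binom_int_absorption:
  "of_int m * binom_int a m = (of_int a - of_int m + 1) * binom_int a (m - 1)"
proof (cases "m \<le> 0")
  case True
  then show ?thesis by (cases "m = 0") (auto simp: binom_int_def)
next
  case False
  then obtain k where k: "m = int (Suc k)"
    by (metis gr0_implies_Suc not_le pos_int_cases)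
  then have "nat m = Suc k" "nat (m - 1) = k" by auto
  with k show ?thesis
    using gbinomial_mult_1[of "of_int a :: real" k] by (simp add: binom_int_def algebra_simps)
qed

lemma binom_int_symmetric: "binom_int (int a) m = binom_int (int a) (int a - m)"
proof (cases "0 \<le> m \<and> m \<le> int a")
  case True
  then obtain q where "m = int q" "q \<le> a"
    by (metis nat_0_le of_nat_le_iff)
  then show ?thesis
    using binom_int_of_nat[of a q] binom_int_of_nat[of a "a - q"]
    by (simp add: binomial_symmetric[symmetric])
next
  case False
  then have "binom_int (int a) m = 0" "binom_int (int a) (int a - m) = 0"
    using binom_int_of_nat[of a "nat m"] binom_int_of_nat[of a "nat (int a - m)"]
    by (auto simp: binom_int_def binomial_eq_0)
  then show ?thesis by simp
qed

definition binom_det :: "int \<Rightarrow> int \<Rightarrow> int \<Rightarrow> int \<Rightarrow> real" where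
  "binom_det a u b v = binom_int a u * binom_int b v - binom_int a (u - 1) * binom_int b (v - 1)"

lemma binom_det_Suc_Suc:
  "binom_det (a + 1) u (b + 1) v =
     binom_det a (u - 1) b v + binom_det a u b (v - 1) + binom_det a u b v + binom_det a (u - 1) b (v - 1)"
  unfolding binom_det_def binom_int_Suc by (simp add: algebra_simps)

lemma binom_det_contact:
  "binom_det (a + 1) u b v + binom_det a (u - 1) (b + 1) (v + 1) - binom_det (a + 1) u (b + 1) (v + 1) =
     binom_det a (u - 1) b v - binom_det a u b (v + 1)"
  unfolding binom_det_def binom_int_Suc by (simp add: algebra_simps)

section \<open>The closed form\<close>

definition pair_count_term :: "int \<Rightarrow> int \<Rightarrow> int \<Rightarrow> int \<Rightarrow> int \<Rightarrow> real" where
  "pair_count_term t a b i j = binom_det (t - 1 - i) (b - i) (t - 1 - j) (t - a - j)"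

definition pair_count_formula :: "int \<Rightarrow> int \<Rightarrow> int \<Rightarrow> nat \<Rightarrow> real" where
  "pair_count_formula t a b c = (\<Sum>i\<le>c. real (c choose i) * pair_count_term t a b (int i) (int (c - i)))"

lemma pair_count_term_Suc:
  "pair_count_term (t + 1) a b i j =
     pair_count_term t (a - 1) (b - 1) i j + pair_count_term t a b i j +
     pair_count_term t (a - 1) b i j + pair_count_term t a (b - 1) i j"
  using binom_det_Suc_Suc[of "t - 1 - i" "b - i" "t - 1 - j" "t + 1 - a - j"]
  unfolding pair_count_term_def by (simp add: algebra_simps)

lemma pair_count_term_contact:
  "pair_count_term (t + 1) e e i (j + 1) + pair_count_term (t + 1) e e (i + 1) j =
     pair_count_term t (e - 1) (e - 1) i j + pair_count_term t e e i j + 2 * pair_count_term t e (e - 1) i j"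
proof -
  have "pair_count_term (t + 1) e e i (j + 1) + pair_count_term (t + 1) e e (i + 1) j
          - pair_count_term (t + 1) e e i j
        = pair_count_term t e (e - 1) i j - pair_count_term t (e - 1) e i j"
    using binom_det_contact[of "t - 1 - i" "e - i" "t - 1 - j" "t - e - j"]
    unfolding pair_count_term_def by (simp add: algebra_simps)
  with pair_count_term_Suc[of t e e i j] show ?thesis by simp
qed

lemma pair_count_term_0:
  assumes "b \<le> a"
  shows "pair_count_term 0 a b (int i) (int j) = (if a = 0 \<and> b = 0 \<and> i = 0 \<and> j = 0 then 1 else 0)"
proof (cases "b < 0")
  case True
  then show ?thesis by (simp add: pair_count_term_def binom_det_def binom_int_def)
next
  case False
  with assms have "pair_count_term 0 a b (int i) (int j) =
      binom_int (- 1 - int i) (b - int i) * binom_int (- 1 - int j) (- a - int j)"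
    by (simp add: pair_count_term_def binom_det_def binom_int_def)
  with False assms show ?thesis by (auto simp: binom_int_def)
qed

lemma pair_count_formula_0:
  assumes "b \<le> a"
  shows "pair_count_formula 0 a b c = (if a = 0 \<and> b = 0 \<and> c = 0 then 1 else 0)"
proof -
  have "pair_count_formula 0 a b c = (\<Sum>i\<le>c. if a = 0 \<and> b = 0 \<and> c = 0 \<and> i = 0 then 1 else 0)"
    unfolding pair_count_formula_def
    by (intro sum.cong refl) (use pair_count_term_0[OF assms] in \<open>auto simp del: of_nat_diff\<close>)
  then show ?thesis by (cases "a = 0 \<and> b = 0 \<and> c = 0") auto
qed

lemma pair_count_formula_Suc:
  "pair_count_formula (t + 1) a b c =
     pair_count_formula t (a - 1) (b - 1) c + pair_count_formula t a b c +
     pair_count_formula t (a - 1) b c + pair_count_formula t a (b - 1) c"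
  unfolding pair_count_formula_def pair_count_term_Suc by (simp add: sum.distrib algebra_simps)

lemma sum_binomial_Suc:
  fixes h :: "nat \<Rightarrow> 'a::comm_semiring_1"
  shows "(\<Sum>i\<le>Suc c. of_nat (Suc c choose i) * h i) = (\<Sum>i\<le>c. of_nat (c choose i) * (h i + h (Suc i)))"
proof -
  have shift: "h 0 + (\<Sum>i\<le>c. of_nat (c choose Suc i) * h (Suc i)) = (\<Sum>i\<le>c. of_nat (c choose i) * h i)"
  proof -
    have "h 0 + (\<Sum>i\<le>c. of_nat (c choose Suc i) * h (Suc i)) = (\<Sum>i\<le>Suc c. of_nat (c choose i) * h i)"
      by (simp only: sum.atMost_Suc_shift) simp
    then show ?thesis by (simp add: binomial_eq_0)
  qed
  have "(\<Sum>i\<le>Suc c. of_nat (Suc c choose i) * h i) =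
      (\<Sum>i\<le>c. of_nat (c choose i) * h (Suc i)) + (h 0 + (\<Sum>i\<le>c. of_nat (c choose Suc i) * h (Suc i)))"
    by (simp add: sum.atMost_Suc_shift sum.distrib algebra_simps del: sum.atMost_Suc)
  also have "\<dots> = (\<Sum>i\<le>c. of_nat (c choose i) * h (Suc i)) + (\<Sum>i\<le>c. of_nat (c choose i) * h i)"
    by (simp only: shift)
  finally show ?thesis by (simp add: sum.distrib algebra_simps)
qed

lemma pair_count_formula_contact:
  "pair_count_formula (t + 1) e e (Suc c) =
     pair_count_formula t (e - 1) (e - 1) c + pair_count_formula t e e c + 2 * pair_count_formula t e (e - 1) c"
proof -
  have "pair_count_term (t + 1) e e (int i) (int (Suc c - i)) +
        pair_count_term (t + 1) e e (int (Suc i)) (int (Suc c - Suc i)) =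
      pair_count_term t (e - 1) (e - 1) (int i) (int (c - i)) + pair_count_term t e e (int i) (int (c - i)) +
      2 * pair_count_term t e (e - 1) (int i) (int (c - i))" if "i \<le> c" for i
    using pair_count_term_contact[of t e "int i" "int (c - i)"] that
    by (simp add: Suc_diff_le add.commute)
  then show ?thesis
    unfolding pair_count_formula_def sum_binomial_Suc
    by (simp add: sum.distrib sum_distrib_left algebra_simps)
qed

lemma pair_count_formula_no_contact: "pair_count_formula (int t + 1) e e 0 = 0"
  using binom_int_symmetric[of t "int t + 1 - e"] binom_int_symmetric[of t "int t - e"]
  by (simp add: pair_count_formula_def pair_count_term_def binom_det_def algebra_simps)

section \<open>Words of step pairs\<close>

definition east_fst :: "(bool \<times> bool) list \<Rightarrow> nat" where
  "east_fst w = length (filter id (map fst w))"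

definition east_snd :: "(bool \<times> bool) list \<Rightarrow> nat" where
  "east_snd w = length (filter id (map snd w))"

definition contacts :: "(bool \<times> bool) list \<Rightarrow> nat" where
  "contacts w = card {i. 1 \<le> i \<and> i \<le> length w \<and> east_fst (take i w) = east_snd (take i w)}"

definition pair_words :: "nat \<Rightarrow> int \<Rightarrow> int \<Rightarrow> nat \<Rightarrow> (bool \<times> bool) list set" where
  "pair_words t a b c = {w. length w = t \<and> int (east_fst w) = a \<and> int (east_snd w) = b \<and> contacts w = c}"

lemma east_fst_snoc [simp]: "east_fst (w @ [x]) = east_fst w + (if fst x then 1 else 0)"
  by (simp add: east_fst_def)

lemma east_snd_snoc [simp]: "east_snd (w @ [x]) = east_snd w + (if snd x then 1 else 0)"
  by (simp add: east_snd_def)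

lemma contacts_Nil [simp]: "contacts [] = 0"
  by (simp add: contacts_def)

lemma contacts_snoc:
  "contacts (w @ [x]) = contacts w + (if east_fst (w @ [x]) = east_snd (w @ [x]) then 1 else 0)"
proof -
  let ?A = "{i. 1 \<le> i \<and> i \<le> length w \<and> east_fst (take i w) = east_snd (take i w)}"
  have "{i. 1 \<le> i \<and> i \<le> length (w @ [x]) \<and> east_fst (take i (w @ [x])) = east_snd (take i (w @ [x]))}
      = ?A \<union> (if east_fst (w @ [x]) = east_snd (w @ [x]) then {Suc (length w)} else {})"
  proof -
    have "take i (w @ [x]) = take i w" if "i \<le> length w" for i
      using that by simp
    then show ?thesis by (auto simp: le_Suc_eq simp del: east_fst_snoc east_snd_snoc)
  qed
  moreover have "finite ?A"
    by (rule finite_subset[of _ "{..length w}"]) auto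
  ultimately show ?thesis
    unfolding contacts_def by (simp add: card_insert_if)
qed

lemma finite_pair_words: "finite (pair_words t a b c)"
  by (rule finite_subset[OF _ finite_lists_length_eq[of UNIV t]]) (auto simp: pair_words_def)

lemma card_eq_sum_card_snoc:
  fixes X :: "'a::finite list set"
  assumes "finite X" and "[] \<notin> X"
  shows "card X = (\<Sum>x\<in>UNIV. card {v. v @ [x] \<in> X})"
proof -
  have X: "X = (\<Union>x\<in>UNIV. (\<lambda>v. v @ [x]) ` {v. v @ [x] \<in> X})"
  proof (intro equalityI subsetI)
    fix w assume "w \<in> X"
    moreover from this assms(2) have "w = butlast w @ [last w]" by (metis append_butlast_last_id)
    ultimately show "w \<in> (\<Union>x\<in>UNIV. (\<lambda>v. v @ [x]) ` {v. v @ [x] \<in> X})"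
      by (metis (mono_tags, lifting) UNIV_I UN_iff image_eqI mem_Collect_eq)
  qed auto
  have fin: "finite {v. v @ [x] \<in> X}" for x
    using finite_vimageI[OF assms(1), of "\<lambda>v. v @ [x]"] by (simp add: inj_def vimage_def)
  have "card X = (\<Sum>x\<in>UNIV. card ((\<lambda>v. v @ [x]) ` {v. v @ [x] \<in> X}))"
    by (subst X, rule card_UN_disjoint) (auto simp: fin)
  also have "\<dots> = (\<Sum>x\<in>UNIV. card {v. v @ [x] \<in> X})"
    by (intro sum.cong refl card_image) (simp add: inj_on_def)
  finally show ?thesis .
qed

lemma pair_words_snoc:
  "v @ [x] \<in> pair_words (Suc t) a b c \<longleftrightarrow>
     \<not> (a = b \<and> c = 0) \<and>
     v \<in> pair_words t (a - (if fst x then 1 else 0)) (b - (if snd x then 1 else 0)) (if a = b then c - 1 else c)"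
proof -
  have "contacts (v @ [x]) = contacts v + (if a = b then 1 else 0)"
    if "int (east_fst (v @ [x])) = a" "int (east_snd (v @ [x])) = b"
    using that contacts_snoc[of v x] by auto
  then show ?thesis
    by (cases "a = b") (auto simp: pair_words_def)
qed

lemma card_pair_words_Suc:
  assumes "\<not> (a = b \<and> c = 0)"
  defines "c' \<equiv> if a = b then c - 1 else c"
  shows "card (pair_words (Suc t) a b c) =
    card (pair_words t (a - 1) (b - 1) c') + card (pair_words t (a - 1) b c') +
    card (pair_words t a (b - 1) c') + card (pair_words t a b c')"
proof -
  have "card (pair_words (Suc t) a b c) = (\<Sum>x\<in>UNIV. card {v. v @ [x] \<in> pair_words (Suc t) a b c})"
    by (rule card_eq_sum_card_snoc[OF finite_pair_words]) (simp add: pair_words_def)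
  also have "\<dots> = (\<Sum>x\<in>UNIV. card (pair_words t (a - (if fst x then 1 else 0)) (b - (if snd x then 1 else 0)) c'))"
    using assms by (simp add: pair_words_snoc c'_def)
  finally show ?thesis
    by (simp add: UNIV_Times_UNIV[symmetric] sum.cartesian_product[symmetric] UNIV_bool del: UNIV_Times_UNIV)
qed

lemma card_pair_words_no_contact: "card (pair_words (Suc t) a a 0) = 0"
proof -
  have "card (pair_words (Suc t) a a 0) = (\<Sum>x\<in>UNIV. card {v. v @ [x] \<in> pair_words (Suc t) a a 0})"
    by (rule card_eq_sum_card_snoc[OF finite_pair_words]) (simp add: pair_words_def)
  then show ?thesis by (simp add: pair_words_snoc)
qed

lemma card_pair_words_swap: "card (pair_words t a b c) = card (pair_words t b a c)"
proof -
  have east: "east_fst (map prod.swap w) = east_snd w" "east_snd (map prod.swap w) = east_fst w" for w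
    by (simp_all add: east_fst_def east_snd_def comp_def)
  have "contacts (map prod.swap w) = contacts w" for w
    unfolding contacts_def by (rule arg_cong[where f = card]) (auto simp: east take_map)
  then have "pair_words t b a c = map prod.swap ` pair_words t a b c"
    by (force simp: pair_words_def east image_iff intro: exI[of _ "map prod.swap _"])
  moreover have "inj_on (map prod.swap) (pair_words t a b c)"
    by (simp add: inj_on_def)
  ultimately show ?thesis
    by (simp add: card_image)
qed

text \<open>The closed form is not symmetric in a and b and agrees with the count only for b \<le> a;
  at a contact the symmetry of the count brings the term W(t, e-1, e, c) back into that range.\<close>

lemma card_pair_words:
  "b \<le> a \<Longrightarrow> real (card (pair_words t a b c)) = pair_count_formula (int t) a b c"
proof (induction t arbitrary: a b c)
  case 0
  have "pair_words 0 a b c = (if a = 0 \<and> b = 0 \<and> c = 0 then {[]} else {})"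
    by (auto simp: pair_words_def east_fst_def east_snd_def)
  then show ?case
    using pair_count_formula_0[OF "0.prems"] by simp
next
  case (Suc t)
  have int_Suc: "int (Suc t) = int t + 1" by simp
  consider "a \<noteq> b" | "a = b" "c = 0" | c' where "a = b" "c = Suc c'"
    by (cases c) auto
  then show ?case
  proof cases
    case 1
    with Suc show ?thesis
      unfolding int_Suc pair_count_formula_Suc by (simp add: card_pair_words_Suc)
  next
    case 2
    then show ?thesis
      unfolding int_Suc using pair_count_formula_no_contact[of t a] by (simp add: card_pair_words_no_contact)
  next
    case 3
    then have "card (pair_words (Suc t) a b c) =
        card (pair_words t (a - 1) (a - 1) c') + card (pair_words t a a c') + 2 * card (pair_words t a (a - 1) c')"
      using card_pair_words_swap[of t "a - 1" a c'] by (simp add: card_pair_words_Suc)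
    with 3 Suc.IH show ?thesis
      unfolding int_Suc by (simp add: pair_count_formula_contact)
  qed
qed

section \<open>Pairs of lattice paths as words\<close>

lemma path_vertex_sum: "i \<le> length p \<Longrightarrow> fst (path_vertex p i) + snd (path_vertex p i) = i"
  using sum_length_filter_compl[of id "take i p"] by (simp add: path_vertex_def)

lemma path_vertex_eq_iff:
  assumes "i \<le> length P" and "i \<le> length Q"
  shows "path_vertex P i = path_vertex Q i \<longleftrightarrow>
    length (filter id (take i P)) = length (filter id (take i Q))"
  using path_vertex_sum[OF assms(1)] path_vertex_sum[OF assms(2)]
  by (auto simp: path_vertex_def)

lemma inj_on_path_vertex: "inj_on (path_vertex p) {..length p}"
  by (rule inj_onI) (metis atMost_iff path_vertex_sum)

lemma path_vertices_Int:
  assumes "length P = length Q"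
  shows "path_vertices P \<inter> path_vertices Q =
    path_vertex P ` {i. i \<le> length P \<and> path_vertex P i = path_vertex Q i}"
proof (intro equalityI subsetI)
  fix x assume "x \<in> path_vertices P \<inter> path_vertices Q"
  then obtain i j where "x = path_vertex P i" "i \<le> length P" "x = path_vertex Q j" "j \<le> length Q"
    unfolding path_vertices_def by blast
  moreover from this have "i = j"
    by (metis path_vertex_sum)
  ultimately show "x \<in> path_vertex P ` {i. i \<le> length P \<and> path_vertex P i = path_vertex Q i}"
    by force
next
  fix x assume "x \<in> path_vertex P ` {i. i \<le> length P \<and> path_vertex P i = path_vertex Q i}"
  then obtain i where "x = path_vertex P i" "x = path_vertex Q i" "i \<le> length P"
    by blast
  moreover from this assms have "i \<le> length Q" by simp
  ultimately show "x \<in> path_vertices P \<inter> path_vertices Q"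
    unfolding path_vertices_def by blast
qed

lemma east_fst_zip: "length P = length Q \<Longrightarrow> east_fst (zip P Q) = length (filter id P)"
  unfolding east_fst_def by simp

lemma east_snd_zip: "length P = length Q \<Longrightarrow> east_snd (zip P Q) = length (filter id Q)"
  unfolding east_snd_def by simp

lemma contacts_zip:
  assumes "length P = length Q"
  shows "contacts (zip P Q) = card ({i. i \<le> length P \<and> path_vertex P i = path_vertex Q i} - {0})"
proof -
  have "east_fst (take i (zip P Q)) = length (filter id (take i P))"
       "east_snd (take i (zip P Q)) = length (filter id (take i Q))" for i
    using assms by (simp_all add: take_zip east_fst_zip east_snd_zip)
  then show ?thesis
    using assms unfolding contacts_def
    by (intro arg_cong[where f = card]) (auto simp: path_vertex_eq_iff)
qed

lemma card_inner_common_vertices: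
  assumes P: "P \<in> lattice_paths n r" and Q: "Q \<in> lattice_paths n r" and "n \<ge> 1"
  shows "card (path_vertices P \<inter> path_vertices Q - {(0, 0), (r, n - r)}) + 1 = contacts (zip P Q)"
proof -
  define I where "I = {i. i \<le> n \<and> path_vertex P i = path_vertex Q i}"
  have len: "length P = n" "length Q = n"
    using P Q by (simp_all add: lattice_paths_def)
  have ends: "path_vertex p 0 = (0, 0)" "path_vertex p n = (r, n - r)" if "p \<in> lattice_paths n r" for p
    using that sum_length_filter_compl[of id p] by (auto simp: path_vertex_def lattice_paths_def)
  then have "0 \<in> I" "n \<in> I"
    using P Q by (simp_all add: I_def)
  have inj: "inj_on (path_vertex P) I"
    by (rule inj_on_subset[OF inj_on_path_vertex]) (auto simp: I_def len)
  have "path_vertices P \<inter> path_vertices Q = path_vertex P ` I"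
    using path_vertices_Int[of P Q] len by (simp add: I_def)
  moreover have "{(0, 0), (r, n - r)} = path_vertex P ` {0, n}"
    using ends[OF P] by simp
  ultimately have "path_vertices P \<inter> path_vertices Q - {(0, 0), (r, n - r)} = path_vertex P ` (I - {0, n})"
    using inj_on_image_set_diff[OF inj, of I "{0, n}"] \<open>0 \<in> I\<close> \<open>n \<in> I\<close> by auto
  moreover have "I - {0, n} = I - {0} - {n}"
    by blast
  ultimately have "card (path_vertices P \<inter> path_vertices Q - {(0, 0), (r, n - r)}) = card (I - {0} - {n})"
    using card_image[OF inj_on_subset[OF inj, of "I - {0} - {n}"]] by auto
  moreover have "card (I - {0}) = Suc (card (I - {0} - {n}))"
    using \<open>n \<in> I\<close> \<open>n \<ge> 1\<close> by (intro card.remove) (auto simp: I_def)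
  moreover have "contacts (zip P Q) = card (I - {0})"
    using contacts_zip[of P Q] len by (simp add: I_def)
  ultimately show ?thesis
    by simp
qed

lemma N_count_eq_card_pair_words:
  assumes "n \<ge> 1"
  shows "N_count k n r = card (pair_words n (int r) (int r) (Suc k))"
proof -
  have inner: "card (path_vertices P \<inter> path_vertices Q - {(0, 0), (r, n - r)}) = k \<longleftrightarrow>
      zip P Q \<in> pair_words n (int r) (int r) (Suc k)"
    if "P \<in> lattice_paths n r" "Q \<in> lattice_paths n r" for P Q
    using card_inner_common_vertices[OF that assms] that
    by (auto simp: pair_words_def lattice_paths_def east_fst_zip east_snd_zip)
  have "bij_betw (\<lambda>(P, Q). zip P Q)
      {(P, Q). P \<in> lattice_paths n r \<and> Q \<in> lattice_paths n r \<and>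
        card (path_vertices P \<inter> path_vertices Q - {(0, 0), (r, n - r)}) = k}
      (pair_words n (int r) (int r) (Suc k))"
  proof (rule bij_betw_byWitness[where f' = "\<lambda>w. (map fst w, map snd w)"])
    show "(\<lambda>w. (map fst w, map snd w)) ` pair_words n (int r) (int r) (Suc k) \<subseteq>
      {(P, Q). P \<in> lattice_paths n r \<and> Q \<in> lattice_paths n r \<and>
        card (path_vertices P \<inter> path_vertices Q - {(0, 0), (r, n - r)}) = k}"
    proof clarify
      fix w assume w: "w \<in> pair_words n (int r) (int r) (Suc k)"
      then have "map fst w \<in> lattice_paths n r" "map snd w \<in> lattice_paths n r"
        by (simp_all add: pair_words_def lattice_paths_def east_fst_def east_snd_def)
      with w inner show "map fst w \<in> lattice_paths n r \<and> map snd w \<in> lattice_paths n r \<and>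
        card (path_vertices (map fst w) \<inter> path_vertices (map snd w) - {(0, 0), (r, n - r)}) = k"
        by (simp add: zip_map_fst_snd)
    qed
  qed (use inner in \<open>auto simp: lattice_paths_def zip_map_fst_snd\<close>)
  then show ?thesis
    unfolding N_count_def by (rule bij_betw_same_card)
qed

section \<open>Evaluation at the endpoint\<close>

lemma binom_det_reflect:
  "binom_det (int a) (int a + 1 - u) (int b) (int b + 1 - v) = - binom_det (int a) u (int b) v"
  using binom_int_symmetric[of a u] binom_int_symmetric[of a "u - 1"]
    binom_int_symmetric[of b v] binom_int_symmetric[of b "v - 1"]
  by (simp add: binom_det_def algebra_simps)

lemma binom_det_absorption:
  fixes a b r s :: nat
  shows "(real r + real s - real a - real b - 2) * binom_det (int a) (int s) (int b) (int r) =
    (real r + real s - real b - 1) * real (a choose s) * real (Suc b choose r) +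
    (real r + real s - real a - 1) * real (b choose r) * real (Suc a choose s)"
proof -
  define P U Q V where "P = binom_int a (int s - 1)" and "U = binom_int a s"
    and "Q = binom_int b (int r - 1)" and "V = binom_int b r"
  have U: "real s * U = (real a - real s + 1) * P"
    using binom_int_absorption[of "int s" "int a"] by (simp add: P_def U_def)
  have V: "real r * V = (real b - real r + 1) * Q"
    using binom_int_absorption[of "int r" "int b"] by (simp add: Q_def V_def)
  have "(real r + real s - real b - 1) * U * (V + Q) + (real r + real s - real a - 1) * V * (U + P)
      - (real r + real s - real a - real b - 2) * (U * V - P * Q)
      = (V + Q) * (real s * U - (real a - real s + 1) * P) + (U + P) * (real r * V - (real b - real r + 1) * Q)"
    by (simp add: algebra_simps)
  also have "\<dots> = 0"
    by (simp add: U V)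
  finally show ?thesis
    using binom_int_Suc[of "int a" "int s"] binom_int_Suc[of "int b" "int r"]
    by (simp add: P_def U_def Q_def V_def binom_det_def binom_int_of_nat[symmetric] algebra_simps)
qed

lemma pair_count_term_endpoint:
  assumes "i + j = k + 1" and "k + 2 \<le> n" and "r \<le> n"
  shows "(real n - real k - 1) * pair_count_term (int n) (int r) (int r) (int i) (int j) =
    real j * (real ((n - k + i - 1) choose r) * real ((n - i - 1) choose (n - r))) +
    real i * (real ((n - k + i - 2) choose r) * real ((n - i) choose (n - r)))"
proof -
  define a b s where "a = n - 1 - i" and "b = n - 1 - j" and "s = n - r"
  have ints: "int a = int n - 1 - int i" "int b = int n - 1 - int j" "int s = int n - int r"
    using assms by (simp_all add: a_def b_def s_def)
  have nat_eqs: "Suc b = n - k + i - 1" "b = n - k + i - 2" "Suc a = n - i" "a = n - i - 1"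
    using assms by (auto simp: a_def b_def)
  have "pair_count_term (int n) (int r) (int r) (int i) (int j) =
      binom_det (int a) (int a + 1 - int s) (int b) (int b + 1 - int r)"
    unfolding pair_count_term_def ints by (simp add: algebra_simps)
  also have "\<dots> = - binom_det (int a) (int s) (int b) (int r)"
    by (rule binom_det_reflect)
  finally have reflected: "pair_count_term (int n) (int r) (int r) (int i) (int j) = - binom_det (int a) (int s) (int b) (int r)" .
  have "real a = real n - 1 - real i" "real b = real n - 1 - real j" "real s = real n - real r"
       "real i + real j = real k + 1"
    using assms by (simp_all add: a_def b_def s_def of_nat_diff flip: of_nat_add)
  then have coeffs: "real r + real s - real a - real b - 2 = - (real n - real k - 1)"
      "real r + real s - real b - 1 = real j" "real r + real s - real a - 1 = real i"
    by linarith+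
  have "(real n - real k - 1) * pair_count_term (int n) (int r) (int r) (int i) (int j) =
      (real r + real s - real a - real b - 2) * binom_det (int a) (int s) (int b) (int r)"
    unfolding reflected coeffs(1) by (simp add: algebra_simps)
  also have "\<dots> = real j * real (a choose s) * real (Suc b choose r) + real i * real (b choose r) * real (Suc a choose s)"
    unfolding binom_det_absorption coeffs(2,3) ..
  finally show ?thesis
    unfolding nat_eqs[symmetric] s_def[symmetric] by (simp only: mult_ac diff_Suc_1)
qed

lemma sum_binomial_Suc_absorb:
  fixes f g :: "nat \<Rightarrow> 'a::comm_semiring_1"
  shows "(\<Sum>i\<le>Suc k. of_nat (Suc k choose i) * (of_nat (Suc k - i) * f i + of_nat i * g i)) =
    of_nat (Suc k) * (\<Sum>i\<le>k. of_nat (k choose i) * (f i + g (Suc i)))"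
proof -
  have "(\<Sum>i\<le>Suc k. of_nat (Suc k choose i) * (of_nat (Suc k - i) * f i)) =
      (\<Sum>i\<le>Suc k. of_nat (Suc k) * (of_nat (k choose i) * f i))"
    by (intro sum.cong refl)
       (metis (no_types, lifting) binomial_absorb_comp diff_Suc_1 mult.assoc mult.commute of_nat_mult)
  also have "\<dots> = of_nat (Suc k) * (\<Sum>i\<le>k. of_nat (k choose i) * f i)"
    by (simp add: sum_distrib_left binomial_eq_0)
  finally have first: "(\<Sum>i\<le>Suc k. of_nat (Suc k choose i) * (of_nat (Suc k - i) * f i)) =
      of_nat (Suc k) * (\<Sum>i\<le>k. of_nat (k choose i) * f i)" .
  have "(\<Sum>i\<le>Suc k. of_nat (Suc k choose i) * (of_nat i * g i)) =
      (\<Sum>i\<le>k. of_nat (Suc k choose Suc i) * (of_nat (Suc i) * g (Suc i)))"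
    by (simp only: sum.atMost_Suc_shift) simp
  also have "\<dots> = (\<Sum>i\<le>k. of_nat (Suc k) * (of_nat (k choose i) * g (Suc i)))"
    by (intro sum.cong refl)
       (metis (no_types, lifting) binomial_absorption diff_Suc_1 mult.assoc mult.commute of_nat_mult)
  finally have second: "(\<Sum>i\<le>Suc k. of_nat (Suc k choose i) * (of_nat i * g i)) =
      of_nat (Suc k) * (\<Sum>i\<le>k. of_nat (k choose i) * g (Suc i))"
    by (simp add: sum_distrib_left)
  show ?thesis
    using first second by (simp add: distrib_left sum.distrib)
qed

lemma pair_count_formula_endpoint:
  assumes "k + 2 \<le> n" and "r \<le> n"
  shows "(real n - real k - 1) * pair_count_formula (int n) (int r) (int r) (Suc k) =
    2 * (real k + 1) *
      (\<Sum>i\<le>k. real (k choose i) * real ((n - k + i - 1) choose r) * real ((n - i - 1) choose (n - r)))"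
proof -
  define X Y where "X i = real ((n - k + i - 1) choose r) * real ((n - i - 1) choose (n - r))"
    and "Y i = real ((n - k + i - 2) choose r) * real ((n - i) choose (n - r))" for i
  have shift: "Y (Suc i) = X i" for i
    using assms by (simp add: X_def Y_def)
  have "(real n - real k - 1) * pair_count_formula (int n) (int r) (int r) (Suc k) =
      (\<Sum>i\<le>Suc k. real (Suc k choose i) * (real (Suc k - i) * X i + real i * Y i))"
    unfolding pair_count_formula_def sum_distrib_left
  proof (intro sum.cong refl)
    fix i assume "i \<in> {..Suc k}"
    then have "(real n - real k - 1) * pair_count_term (int n) (int r) (int r) (int i) (int (Suc k - i)) =
        real (Suc k - i) * X i + real i * Y i"
      using pair_count_term_endpoint[of i "Suc k - i" k n r] assms by (simp add: X_def Y_def)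
    then show "(real n - real k - 1) * (real (Suc k choose i) * pair_count_term (int n) (int r) (int r) (int i) (int (Suc k - i))) =
        real (Suc k choose i) * (real (Suc k - i) * X i + real i * Y i)"
      by (simp add: algebra_simps)
  qed
  also have "\<dots> = real (Suc k) * (\<Sum>i\<le>k. real (k choose i) * (X i + Y (Suc i)))"
    by (rule sum_binomial_Suc_absorb)
  finally show ?thesis
    using shift by (simp add: X_def sum_distrib_left algebra_simps)
qed

theorem mainTheorem1:
  fixes n r k :: nat
  assumes "n \<ge> 2" and "r \<le> n" and "k \<le> n - 2"
  shows "real (N_count k n r) =
    (2 * (real k + 1) / (real n - real k - 1)) *
      (\<Sum>i = 0..k. real (k choose i) * real ((n - k + i - 1) choose r) * real ((n - i - 1) choose (n - r)))"
proof -
  have "k + 2 \<le> n"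
    using assms by linarith
  have "real (N_count k n r) = pair_count_formula (int n) (int r) (int r) (Suc k)"
    using N_count_eq_card_pair_words[of n k r] card_pair_words[of "int r" "int r" n "Suc k"] assms by simp
  moreover have "real n - real k - 1 > 0"
    using \<open>k + 2 \<le> n\<close> by linarith
  ultimately show ?thesis
    using pair_count_formula_endpoint[OF \<open>k + 2 \<le> n\<close> assms(2)]
    by (simp add: atLeast0AtMost field_simps)
qed

end
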